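(* Let $m\in\mathbb{N}$, let $\|\cdot\|_{\mathbb{R}^m}$ be a norm on $\mathbb{R}^m$ with dual norm $\|\cdot\|^*_{\mathbb{R}^m}$, let $\mathbf{a}_j=(a_{j,k}:k\in\mathbb{N})$, $j\in\{1,\dots,m\}$, be linearly independent elements of $c_0(\mathbb{N})$, and let $A$ be the semi-infinite matrix with rows $\mathbf{a}_1,\dots,\mathbf{a}_m$, viewed as the operator $\ell_1(\mathbb{N})\to\mathbb{R}^m$, $A\mathbf{x}=\big(\sum_{k}a_{j,k}x_k\big)_{j=1}^m$. Let $\mathbf{y}_0=(y_j)_{j=1}^m\in\mathbb{R}^m$, $\rho>0$, $p\in[1,+\infty)$, and let $p'\in(1,+\infty]$ satisfy $1/p+1/p'=1$. Let $\hat\lambda\in\mathbb{R}^m$ be a solution of the dual problem $$\sup\Big\{\sum_{j=1}^m y_j\lambda_j:\ \lambda\in\mathbb{R}^m,\ \Big\|\Big(\|\lambda\|^*_{\mathbb{R}^m},\ \Big\|\rho^{-1/p}\sum_{j=1}^m\lambda_j\mathbf{a}_j\Big\|_\infty\Big)\Big\|_{p'}\le1\Big\},$$ where $\|(s,t)\|_{p'}=(s^{p'}+t^{p'})^{1/p'}$ for $p'<\infty$ and $\max\{s,t\}$ for $p'=\infty$. Let $\hat\mu:=\sum_{j=1}^m\hat\lambda_j\mathbf{a}_j\in c_0(\mathbb{N})$ and write $\mathbb{N}(\hat\mu):=\{k\in\mathbb{N}:|\hat\mu_k|=\|\hat\mu\|_\infty\}=\{k_1,\dots,k_n\}$. Let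 $A_{\hat\mu}\in\mathbb{R}^{m\times n}$ be the matrix with entries $(A_{\hat\mu})_{ij}=a_{i,k_j}$. If $\hat{\mathbf{z}}=(\hat z_1,\dots,\hat z_n)$ is a solution of $$\inf\{(\|\mathbf{y}_0-A_{\hat\mu}\mathbf{z}\|^p_{\mathbb{R}^m}+\rho\|\mathbf{z}\|_1^p)^{1/p}:\mathbf{z}\in\mathbb{R}^n\},$$ then the sequence $\hat{\mathbf{x}}=(\hat x_k:k\in\mathbb{N})$ defined by $\hat x_{k_j}:=\hat z_j$ for $j=1,\dots,n$ and $\hat x_k:=0$ for $k\notin\mathbb{N}(\hat\mu)$ is a solution of $$\inf\{(\|\mathbf{y}_0-A\mathbf{x}\|^p_{\mathbb{R}^m}+\rho\|\mathbf{x}\|_1^p)^{1/p}:\mathbf{x}\in\ell_1(\mathbb{N})\}.$$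
   Context: $\ell_1(\mathbb{N})$ is the space of real sequences with $\|\mathbf{x}\|_1=\sum_k|x_k|<\infty$; $c_0(\mathbb{N})$ is the space of real sequences tending to $0$ with $\|\mathbf{c}\|_\infty=\sup_k|c_k|$. For $\mathbf{z}\in\mathbb{R}^n$, $\|\mathbf{z}\|_1=\sum_j|z_j|$. The dual norm is $\|\lambda\|^*_{\mathbb{R}^m}=\sup\{\sum_j\lambda_jy_j:\|\mathbf{y}\|_{\mathbb{R}^m}\le1\}$. *)

theory Defs
  imports "HOL-Analysis.Analysis" "HOL-Library.Extended_Real"
begin

definition is_norm :: "(real^'m \<Rightarrow> real) \<Rightarrow> bool" where
  "is_norm N \<longleftrightarrow>
     (\<forall>x. 0 \<le> N x) \<and> (\<forall>x. N x = 0 \<longleftrightarrow> x = 0) \<and>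
     (\<forall>c x. N (c *\<^sub>R x) = \<bar>c\<bar> * N x) \<and> (\<forall>x y. N (x + y) \<le> N x + N y)"

definition dual_norm :: "(real^'m \<Rightarrow> real) \<Rightarrow> real^'m \<Rightarrow> real" where
  "dual_norm N l = Sup {(\<Sum>j\<in>UNIV. l$j * y$j) | y. N y \<le> 1}"

definition sup_norm :: "(nat \<Rightarrow> real) \<Rightarrow> real" where
  "sup_norm f = (SUP k. \<bar>f k\<bar>)"

definition pair_norm :: "ereal \<Rightarrow> real \<Rightarrow> real \<Rightarrow> real" where
  "pair_norm q s t = (if q = \<infinity> then max s t
     else (s powr real_of_ereal q + t powr real_of_ereal q) powr (1 / real_of_ereal q))"

definition lin_indep_family :: "('m::finite \<Rightarrow> nat \<Rightarrow> real) \<Rightarrow> bool" where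
  "lin_indep_family a \<longleftrightarrow>
     (\<forall>c::'m \<Rightarrow> real. (\<forall>k. (\<Sum>j\<in>UNIV. c j * a j k) = 0) \<longrightarrow> (\<forall>j. c j = 0))"

definition opA :: "('m::finite \<Rightarrow> nat \<Rightarrow> real) \<Rightarrow> (nat \<Rightarrow> real) \<Rightarrow> real^'m" where
  "opA a x = (\<chi> j. (\<Sum>k. a j k * x k))"

end

theory Submission
  imports Defs
begin

text \<open>
  Weak duality: for a dual feasible \<open>l\<close> and absolutely summable \<open>x\<close>, Hoelder's inequality for the pair norm
  gives \<open>l \<bullet> y0\<close> \<open>\<le>\<close> the objective at \<open>x\<close>. Since \<open>xhat\<close> attains the value \<open>V\<close> of the problem
  restricted to the columns \<open>kk j\<close>, \<open>j < n\<close>, it suffices to show \<open>V \<le> lam \<bullet> y0\<close>. The restricted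
  problem is finite dimensional, so separating \<open>y0\<close> from a strict sublevel set yields \<open>l'\<close> with
  \<open>l' \<bullet> y0 = V\<close> that is feasible for the restricted dual. The sequence \<open>\<mu> = \<Sum>\<^sub>j lam$j a j\<close> tends
  to 0, so off its finitely many maximisers \<open>\<bar>\<mu>\<bar>\<close> stays a fixed distance below its sup norm. Hence
  for small \<open>t > 0\<close> the point \<open>(1 - t) lam + t l'\<close> still attains its sup norm at some \<open>kk j\<close>,
  which makes it feasible for the full dual, and optimality of \<open>lam\<close> gives
  \<open>(1 - t) (lam \<bullet> y0) + t V \<le> lam \<bullet> y0\<close>.
\<close>

definition objective :: "real \<Rightarrow> real \<Rightarrow> real \<Rightarrow> real \<Rightarrow> real" where
  "objective \<rho> p u s = (u powr p + \<rho> * s powr p) powr (1/p)"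

definition comb_seq :: "('m::finite \<Rightarrow> nat \<Rightarrow> real) \<Rightarrow> real^'m \<Rightarrow> nat \<Rightarrow> real" where
  "comb_seq a l k = (\<Sum>j\<in>UNIV. l$j * a j k)"

definition dual_feasible ::
    "(real^'m \<Rightarrow> real) \<Rightarrow> ('m::finite \<Rightarrow> nat \<Rightarrow> real) \<Rightarrow> real \<Rightarrow> real \<Rightarrow> ereal \<Rightarrow> real^'m \<Rightarrow> bool" where
  "dual_feasible N a \<rho> p p' l \<longleftrightarrow>
     pair_norm p' (dual_norm N l) (sup_norm (\<lambda>k. \<rho> powr (-1/p) * comb_seq a l k)) \<le> 1"

definition opA_cols :: "('m::finite \<Rightarrow> nat \<Rightarrow> real) \<Rightarrow> (nat \<Rightarrow> nat) \<Rightarrow> nat \<Rightarrow> (nat \<Rightarrow> real) \<Rightarrow> real^'m" where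
  "opA_cols a kk n z = (\<chi> i. \<Sum>j<n. a i (kk j) * z j)"

section \<open>Norms on \<open>real^'m\<close> and their duals\<close>

lemma is_norm_0: "is_norm N \<Longrightarrow> N 0 = 0"
  by (simp add: is_norm_def)

lemma is_norm_nonneg: "is_norm N \<Longrightarrow> 0 \<le> N x"
  by (simp add: is_norm_def)

lemma is_norm_eq_0_iff: "is_norm N \<Longrightarrow> N x = 0 \<longleftrightarrow> x = 0"
  by (simp add: is_norm_def)

lemma is_norm_pos: "is_norm N \<Longrightarrow> x \<noteq> 0 \<Longrightarrow> 0 < N x"
  by (metis is_norm_eq_0_iff is_norm_nonneg less_eq_real_def)

lemma is_norm_scaleR: "is_norm N \<Longrightarrow> N (c *\<^sub>R x) = \<bar>c\<bar> * N x"
  by (simp add: is_norm_def)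

lemma is_norm_triangle: "is_norm N \<Longrightarrow> N (x + y) \<le> N x + N y"
  by (simp add: is_norm_def)

lemma is_norm_convex: "is_norm N \<Longrightarrow> convex_on UNIV N"
  by (rule convex_onI) (auto simp: is_norm_def intro: order.trans[OF is_norm_triangle])

lemma is_norm_ge_norm:
  fixes N :: "real^'m \<Rightarrow> real"
  assumes "is_norm N"
  obtains c where "c > 0" "\<And>x. c * norm x \<le> N x"
proof -
  have "continuous_on (sphere 0 1) N"
    using convex_on_continuous[OF open_UNIV is_norm_convex[OF assms]] continuous_on_subset by blast
  moreover have "sphere (0::real^'m) 1 \<noteq> {}"
    by (metis norm_axis_1 mem_sphere_0 empty_iff)
  ultimately obtain x0 where x0: "x0 \<in> sphere 0 1" "\<And>y. y \<in> sphere 0 1 \<Longrightarrow> N x0 \<le> N y"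
    using continuous_attains_inf[OF compact_sphere] by blast
  have "N x0 * norm x \<le> N x" for x
  proof (cases "x = 0")
    case False
    have "N x0 \<le> N ((1 / norm x) *\<^sub>R x)" using x0(2) False by simp
    also have "\<dots> = N x / norm x" using is_norm_scaleR[OF assms] by simp
    finally show ?thesis using False by (simp add: field_simps)
  qed (simp add: is_norm_0[OF assms])
  moreover have "N x0 > 0" using x0(1) is_norm_pos[OF assms, of x0] by fastforce
  ultimately show thesis using that by blast
qed

lemma dual_norm_eq_Sup_inner: "dual_norm N l = Sup {l \<bullet> y | y. N y \<le> 1}"
  by (simp add: dual_norm_def inner_vec_def)

lemma dual_norm_bdd_above:
  fixes N :: "real^'m \<Rightarrow> real"
  assumes "is_norm N"
  shows "bdd_above {l \<bullet> y | y. N y \<le> 1}"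
proof -
  obtain c where c: "c > 0" "\<And>x. c * norm x \<le> N x" using is_norm_ge_norm[OF assms] by blast
  have "l \<bullet> y \<le> norm l / c" if "N y \<le> 1" for y
  proof -
    have "norm l * (c * norm y) \<le> norm l" using c(2)[of y] that by (simp add: mult_left_le)
    moreover have "c * (l \<bullet> y) \<le> c * (norm l * norm y)"
      using norm_cauchy_schwarz[of l y] c(1) by simp
    ultimately have "c * (l \<bullet> y) \<le> norm l" by (simp add: algebra_simps)
    then show ?thesis using c(1) by (simp add: field_simps)
  qed
  then show ?thesis by (intro bdd_aboveI[of _ "norm l / c"]) blast
qed

lemma dual_norm_upper: "is_norm N \<Longrightarrow> N y \<le> 1 \<Longrightarrow> l \<bullet> y \<le> dual_norm N l"
  unfolding dual_norm_eq_Sup_inner by (rule cSup_upper) (auto simp: dual_norm_bdd_above)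

lemma dual_norm_nonneg: "is_norm N \<Longrightarrow> 0 \<le> dual_norm N l"
  using dual_norm_upper[of N 0 l] by (simp add: is_norm_0)

lemma inner_le_dual_norm:
  assumes "is_norm N"
  shows "l \<bullet> w \<le> dual_norm N l * N w"
proof (cases "w = 0")
  case False
  then have pos: "N w > 0" using is_norm_pos[OF assms] by blast
  have "l \<bullet> ((1 / N w) *\<^sub>R w) \<le> dual_norm N l"
    using pos by (intro dual_norm_upper[OF assms]) (simp add: is_norm_scaleR[OF assms])
  then show ?thesis using pos by (simp add: field_simps)
qed (simp add: is_norm_0[OF assms])

lemma mult_dual_norm_le:
  assumes "is_norm N" "0 \<le> \<alpha>" "\<And>y. N y \<le> 1 \<Longrightarrow> \<alpha> * (l \<bullet> y) \<le> c"
  shows "\<alpha> * dual_norm N l \<le> c"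
proof (cases "\<alpha> = 0")
  case True
  then show ?thesis using assms(3)[of 0] by (simp add: is_norm_0[OF assms(1)])
next
  case False
  have "dual_norm N l \<le> c / \<alpha>"
    unfolding dual_norm_eq_Sup_inner
  proof (rule cSup_least)
    have "l \<bullet> 0 \<in> {l \<bullet> y | y. N y \<le> 1}" using is_norm_0[OF assms(1)] by fastforce
    then show "{l \<bullet> y | y. N y \<le> 1} \<noteq> {}" by blast
    show "x \<le> c / \<alpha>" if "x \<in> {l \<bullet> y | y. N y \<le> 1}" for x
      using that assms(2,3) False by (auto simp: field_simps)
  qed
  then show ?thesis using False assms(2) by (simp add: field_simps)
qed

lemma dual_norm_0: "is_norm N \<Longrightarrow> dual_norm N 0 = 0"
  using mult_dual_norm_le[of N 1 0 0] dual_norm_nonneg[of N 0] by simp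

section \<open>Hoelder's inequality for pairs\<close>

lemma one_div_ereal: "0 < p \<Longrightarrow> 1 / ereal p = ereal (1 / p)"
  by (simp add: divide_ereal_def one_ereal_def inverse_eq_divide)

lemma conjugate_exponent_cases:
  assumes "1 \<le> p" "p' > 1" "1 / ereal p + 1 / p' = 1"
  obtains "p = 1" "p' = \<infinity>"
    | q where "p > 1" "p' = ereal q" "q > 1" "1/p + 1/q = 1"
proof (cases p')
  case (real q)
  with assms have q: "q > 1" "1/p + 1/q = 1" by (simp_all add: one_div_ereal)
  then have "p \<noteq> 1" by auto
  then show thesis using that(2) q real assms(1) by simp
next
  case PInf
  then show thesis using that(1) assms by (simp add: one_div_ereal)
qed (use assms in simp)

lemma Holder_pair:
  fixes p q s t a b :: real
  assumes pq: "p > 1" "q > 1" "1/p + 1/q = 1"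
    and nn: "0 \<le> s" "0 \<le> t" "0 \<le> a" "0 \<le> b"
    and st: "(s powr q + t powr q) powr (1/q) \<le> 1"
  shows "s*a + t*b \<le> (a powr p + b powr p) powr (1/p)"
proof -
  let ?S = "s powr q + t powr q"
  have S1: "?S \<le> 1"
  proof (rule ccontr)
    assume "\<not> ?S \<le> 1"
    then have "1 powr (1/q) < ?S powr (1/q)" by (intro powr_less_mono2) (use pq in auto)
    then show False using st by simp
  qed
  let ?A = "(a powr p + b powr p) powr (1/p)"
  show ?thesis
  proof (cases "a powr p + b powr p = 0")
    case True
    then have "a = 0" "b = 0" using nn by (smt (verit) powr_ge_zero powr_eq_0_iff)+
    then show ?thesis by simp
  next
    case False
    have Ap: "a powr p + b powr p > 0" using False nn by (smt (verit) powr_ge_zero)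
    then have A0: "?A > 0" by simp
    have "(a / ?A) powr p + (b / ?A) powr p = (a powr p + b powr p) / ?A powr p"
      using nn A0 by (simp add: powr_divide add_divide_distrib)
    also have "\<dots> = 1" using Ap pq by (simp add: powr_powr)
    finally have one: "(a / ?A) powr p + (b / ?A) powr p = 1" .
    have "s * (a / ?A) + t * (b / ?A)
        \<le> (s powr q / q + (a / ?A) powr p / p) + (t powr q / q + (b / ?A) powr p / p)"
      using Youngs_inequality[of q p s "a / ?A"] Youngs_inequality[of q p t "b / ?A"] pq nn A0
      by (intro add_mono) (simp_all add: add.commute)
    also have "\<dots> = ?S / q + ((a / ?A) powr p + (b / ?A) powr p) / p"
      by (simp add: add_divide_distrib)
    also have "\<dots> \<le> 1 / q + 1 / p" using S1 one pq by (simp add: divide_right_mono)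
    finally have "(s * a + t * b) / ?A \<le> 1" using pq by (simp add: add_divide_distrib)
    then show ?thesis using A0 by (simp add: divide_le_eq)
  qed
qed

lemma Holder_pair_converse:
  fixes p q s t :: real
  assumes pq: "p > 1" "q > 1" "1/p + 1/q = 1"
    and nn: "0 \<le> s" "0 \<le> t"
    and H: "\<And>\<alpha> \<beta>. 0 \<le> \<alpha> \<Longrightarrow> 0 \<le> \<beta> \<Longrightarrow> s*\<alpha> + t*\<beta> \<le> (\<alpha> powr p + \<beta> powr p) powr (1/p)"
  shows "(s powr q + t powr q) powr (1/q) \<le> 1"
proof -
  let ?S = "s powr q + t powr q"
  have qp: "(q - 1) * p = q" using pq by (simp add: field_simps)
  have "x * x powr (q - 1) = x powr q" if "0 \<le> x" for x :: real
    using that pq by (cases "x = 0") (auto simp: powr_diff)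
  then have "?S \<le> ((s powr (q-1)) powr p + (t powr (q-1)) powr p) powr (1/p)"
    using H[of "s powr (q-1)" "t powr (q-1)"] nn by simp
  also have "\<dots> = ?S powr (1/p)" by (simp add: powr_powr qp)
  finally have le: "?S \<le> ?S powr (1/p)" .
  have "?S \<le> 1"
  proof (rule ccontr)
    assume "\<not> ?S \<le> 1"
    then have "?S powr (1/p) < ?S powr 1" by (intro powr_less_mono) (use pq in auto)
    then show False using le by simp
  qed
  then show ?thesis using nn pq by (intro powr_le1) auto
qed

lemma pair_norm_le_1_iff:
  assumes "1 \<le> p" "p' > 1" "1 / ereal p + 1 / p' = 1" "0 \<le> s" "0 \<le> t"
  shows "pair_norm p' s t \<le> 1 \<longleftrightarrow>
    (\<forall>\<alpha> \<beta>. 0 \<le> \<alpha> \<longrightarrow> 0 \<le> \<beta> \<longrightarrow> s*\<alpha> + t*\<beta> \<le> (\<alpha> powr p + \<beta> powr p) powr (1/p))"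
  using assms(1-3)
proof (cases rule: conjugate_exponent_cases)
  case 1
  have "s*\<alpha> + t*\<beta> \<le> \<alpha> + \<beta>" if "s \<le> 1" "t \<le> 1" "0 \<le> \<alpha>" "0 \<le> \<beta>" for \<alpha> \<beta>
    using that assms(4,5) by (intro add_mono) (simp_all add: mult_left_le_one_le)
  moreover have "s \<le> 1 \<and> t \<le> 1" if "\<forall>\<alpha>\<ge>0. \<forall>\<beta>\<ge>0. s * \<alpha> + t * \<beta> \<le> \<alpha> + \<beta>"
    using that[rule_format, of 1 0] that[rule_format, of 0 1] by simp
  ultimately show ?thesis using 1 assms(4,5) by (auto simp: pair_norm_def)
next
  case (2 q)
  then show ?thesis
    using Holder_pair[OF 2(1,3,4) assms(4,5)] Holder_pair_converse[OF 2(1,3,4) assms(4,5)]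
    by (auto simp: pair_norm_def)
qed

lemma objective_nonneg: "0 \<le> objective \<rho> p u s"
  by (simp add: objective_def)

lemma objective_eq_pair:
  assumes "0 < \<rho>" "0 < p" "0 \<le> s"
  shows "objective \<rho> p u s = (u powr p + (\<rho> powr (1/p) * s) powr p) powr (1/p)"
  using assms by (simp add: objective_def powr_mult powr_powr)

lemma objective_mono:
  assumes "0 \<le> \<rho>" "0 < p" "0 \<le> u" "u \<le> u'" "0 \<le> s" "s \<le> s'"
  shows "objective \<rho> p u s \<le> objective \<rho> p u' s'"
  unfolding objective_def using assms
  by (intro powr_mono2 add_mono mult_left_mono) (auto intro: powr_mono2)

lemma objective_scale:
  assumes "0 \<le> \<rho>" "0 < p" "0 \<le> k" "0 \<le> u" "0 \<le> s"
  shows "objective \<rho> p (k * u) (k * s) = k * objective \<rho> p u s"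
proof -
  have "(k * u) powr p + \<rho> * (k * s) powr p = k powr p * (u powr p + \<rho> * s powr p)"
    using assms by (simp add: powr_mult algebra_simps)
  then show ?thesis
    using assms by (simp add: objective_def powr_mult powr_powr)
qed

lemma powr_convex_comb_le:
  fixes x y u v p :: real
  assumes "0 \<le> x" "0 \<le> y" "0 \<le> u" "0 \<le> v" "u + v = 1" "1 \<le> p"
  shows "(u * x + v * y) powr p \<le> u * x powr p + v * y powr p"
proof -
  have pw: "c powr p \<le> c" if "0 \<le> c" "c \<le> 1" for c
    using that powr_le_one_le[of c p] assms(6) by (cases "c = 0") auto
  \<comment> \<open>\<open>powr_convex\<close> only covers the open half-line, so the boundary cases are done by hand.\<close>
  consider "x = 0" | "y = 0" | "x > 0" "y > 0" using assms(1,2) by linarith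
  then show ?thesis
  proof cases
    case 1
    have "(v * y) powr p = v powr p * y powr p" using assms by (simp add: powr_mult)
    also have "\<dots> \<le> v * y powr p" using pw[of v] assms by (intro mult_right_mono) auto
    finally show ?thesis using 1 assms by simp
  next
    case 2
    have "(u * x) powr p = u powr p * x powr p" using assms by (simp add: powr_mult)
    also have "\<dots> \<le> u * x powr p" using pw[of u] assms by (intro mult_right_mono) auto
    finally show ?thesis using 2 assms by simp
  next
    case 3
    then show ?thesis
      using convex_onD[OF powr_convex[OF assms(6)], of v x y] assms
      by (simp add: eq_diff_eq[symmetric])
  qed
qed

lemma objective_quasiconvex:
  assumes "0 \<le> \<rho>" "1 \<le> p" "0 \<le> u" "0 \<le> v" "u + v = 1"
    and "0 \<le> u1" "0 \<le> u2" "0 \<le> s1" "0 \<le> s2"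
    and "objective \<rho> p u1 s1 < V" "objective \<rho> p u2 s2 < V"
  shows "objective \<rho> p (u * u1 + v * u2) (u * s1 + v * s2) < V"
proof -
  define I where "I x s = x powr p + \<rho> * s powr p" for x s
  have I_nonneg: "0 \<le> I x s" for x s using assms(1) by (simp add: I_def)
  have lt_iff: "objective \<rho> p x s < V \<longleftrightarrow> I x s < V powr p" if "0 < V" for x s
  proof -
    have "objective \<rho> p x s < V \<longleftrightarrow> I x s powr (1/p) < (V powr p) powr (1/p)"
      using that assms(2) by (simp add: objective_def I_def powr_powr)
    also have "\<dots> \<longleftrightarrow> I x s < V powr p"
    proof -
      have "0 < 1/p" "0 \<le> V powr p" using assms(2) by simp_all
      then show ?thesis using I_nonneg[of x s] by (meson not_le powr_less_mono2 powr_mono2 less_imp_le)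
    qed
    finally show ?thesis .
  qed
  have V: "0 < V" using objective_nonneg assms(10) by (rule le_less_trans)
  have "I (u * u1 + v * u2) (u * s1 + v * s2) \<le> u * I u1 s1 + v * I u2 s2"
    using add_mono[OF powr_convex_comb_le[of u1 u2 u v p]
        mult_left_mono[OF powr_convex_comb_le[of s1 s2 u v p], of \<rho>]] assms(1-9)
    by (simp add: I_def algebra_simps)
  also have "\<dots> < V powr p"
    using convex_bound_lt[of "I u1 s1" "V powr p" "I u2 s2" u v] assms(3-5,10,11) V
    by (simp add: lt_iff)
  finally show ?thesis using V by (simp add: lt_iff)
qed

lemma tendsto_0_bounded:
  fixes f :: "nat \<Rightarrow> real"
  assumes "f \<longlonglongrightarrow> 0"
  obtains K where "K > 0" "\<And>k. \<bar>f k\<bar> \<le> K"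
  using convergent_imp_Bseq[OF convergentI[OF assms]] that unfolding Bseq_def by auto

lemma abs_le_sup_norm:
  assumes "f \<longlonglongrightarrow> 0"
  shows "\<bar>f k\<bar> \<le> sup_norm f"
proof -
  obtain K where "\<And>k. \<bar>f k\<bar> \<le> K" using tendsto_0_bounded[OF assms] by blast
  then show ?thesis unfolding sup_norm_def by (intro cSUP_upper bdd_aboveI2) auto
qed

lemma sup_norm_nonneg: "f \<longlonglongrightarrow> 0 \<Longrightarrow> 0 \<le> sup_norm f"
  using abs_le_sup_norm[of f 0] by simp

lemma sup_norm_le: "(\<And>k. \<bar>f k\<bar> \<le> c) \<Longrightarrow> sup_norm f \<le> c"
  unfolding sup_norm_def by (rule cSUP_least) auto

lemma sup_norm_cmult:
  assumes "f \<longlonglongrightarrow> 0" "0 \<le> c"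
  shows "sup_norm (\<lambda>k. c * f k) = c * sup_norm f"
proof (cases "c = 0")
  case True
  then show ?thesis by (simp add: sup_norm_def)
next
  case False
  then have c: "c > 0" using assms(2) by simp
  have "sup_norm (\<lambda>k. c * f k) \<le> c * sup_norm f"
    using abs_le_sup_norm[OF assms(1)] c by (intro sup_norm_le) (simp add: abs_mult)
  moreover have "sup_norm f \<le> sup_norm (\<lambda>k. c * f k) / c"
    using abs_le_sup_norm[OF tendsto_mult_right_zero[OF assms(1)], of c] c
    by (intro sup_norm_le) (simp add: abs_mult field_simps)
  ultimately show ?thesis using c by (simp add: field_simps)
qed

lemma comb_seq_tendsto_0: "\<forall>j. a j \<longlonglongrightarrow> 0 \<Longrightarrow> comb_seq a l \<longlonglongrightarrow> 0"
  unfolding comb_seq_def[abs_def] by (intro tendsto_null_sum tendsto_mult_right_zero) auto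

lemma comb_seq_add: "comb_seq a (l1 + l2) k = comb_seq a l1 k + comb_seq a l2 k"
  by (simp add: comb_seq_def sum.distrib distrib_right)

lemma comb_seq_diff: "comb_seq a (l1 - l2) k = comb_seq a l1 k - comb_seq a l2 k"
  by (simp add: comb_seq_def sum_subtractf left_diff_distrib)

lemma comb_seq_scaleR: "comb_seq a (c *\<^sub>R l) k = c * comb_seq a l k"
  by (simp add: comb_seq_def sum_distrib_left mult.assoc)

lemma mult_le_abs_bound: "\<bar>c\<bar> \<le> M \<Longrightarrow> c * x \<le> M * \<bar>x\<bar>" for c x M :: real
  by (rule order.trans[OF abs_ge_self]) (simp add: abs_mult mult_right_mono)

lemma summable_bounded_mult:
  fixes g x :: "nat \<Rightarrow> real"
  assumes "\<And>k. \<bar>g k\<bar> \<le> K" "summable (\<lambda>k. \<bar>x k\<bar>)"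
  shows "summable (\<lambda>k. g k * x k)"
proof (rule summable_comparison_test'[of "\<lambda>k. K * \<bar>x k\<bar>" 0])
  show "summable (\<lambda>k. K * \<bar>x k\<bar>)" using assms(2) by (rule summable_mult)
  show "norm (g k * x k) \<le> K * \<bar>x k\<bar>" for k
    using assms(1)[of k] by (simp add: abs_mult mult_right_mono)
qed

lemma suminf_mult_le_sup_norm:
  fixes f x :: "nat \<Rightarrow> real"
  assumes "f \<longlonglongrightarrow> 0" "summable (\<lambda>k. \<bar>x k\<bar>)"
  shows "(\<Sum>k. f k * x k) \<le> sup_norm f * (\<Sum>k. \<bar>x k\<bar>)"
proof -
  have "(\<Sum>k. f k * x k) \<le> (\<Sum>k. sup_norm f * \<bar>x k\<bar>)"
  proof (rule suminf_le)
    show "f k * x k \<le> sup_norm f * \<bar>x k\<bar>" for k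
      by (rule mult_le_abs_bound[OF abs_le_sup_norm[OF assms(1)]])
    show "summable (\<lambda>k. f k * x k)"
      using abs_le_sup_norm[OF assms(1)] assms(2) by (rule summable_bounded_mult)
  qed (use assms(2) in simp)
  then show ?thesis using suminf_mult[OF assms(2)] by simp
qed

lemma sum_mult_le_sup_norm:
  fixes f z :: "nat \<Rightarrow> real"
  assumes "f \<longlonglongrightarrow> 0"
  shows "(\<Sum>j<n. f (kk j) * z j) \<le> sup_norm f * (\<Sum>j<n. \<bar>z j\<bar>)"
  unfolding sum_distrib_left
  by (intro sum_mono mult_le_abs_bound abs_le_sup_norm[OF assms])

lemma suminf_finite_support:
  fixes kk :: "nat \<Rightarrow> nat" and G :: "nat \<Rightarrow> real \<Rightarrow> real"
  assumes inj: "inj_on kk {..<n}" and on: "\<forall>j<n. x (kk j) = z j"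
    and off: "\<forall>k. k \<notin> kk ` {..<n} \<longrightarrow> x k = 0" and G: "\<And>k. G k 0 = 0"
  shows "summable (\<lambda>k. G k (x k))" "(\<Sum>k. G k (x k)) = (\<Sum>j<n. G (kk j) (z j))"
proof -
  have fin: "finite (kk ` {..<n})" by simp
  have zero: "\<And>k. k \<notin> kk ` {..<n} \<Longrightarrow> G k (x k) = 0" using off G by simp
  show "summable (\<lambda>k. G k (x k))" by (rule summable_finite[OF fin zero])
  have "(\<Sum>k. G k (x k)) = (\<Sum>k\<in>kk ` {..<n}. G k (x k))" by (rule suminf_finite[OF fin zero])
  also have "\<dots> = (\<Sum>j<n. G (kk j) (z j))" using on by (simp add: sum.reindex[OF inj])
  finally show "(\<Sum>k. G k (x k)) = (\<Sum>j<n. G (kk j) (z j))" .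
qed

lemma opA_finite_support:
  assumes "inj_on kk {..<n}" "\<forall>j<n. x (kk j) = z j" "\<forall>k. k \<notin> kk ` {..<n} \<longrightarrow> x k = 0"
  shows "opA a x = opA_cols a kk n z"
proof -
  have "(\<Sum>k. a i k * x k) = (\<Sum>j<n. a i (kk j) * z j)" for i
    using suminf_finite_support(2)[OF assms, of "\<lambda>k v. a i k * v"] by simp
  then show ?thesis by (simp add: opA_def opA_cols_def vec_eq_iff)
qed

lemma inner_opA:
  assumes c0: "\<forall>j. a j \<longlonglongrightarrow> 0" and x: "summable (\<lambda>k. \<bar>x k\<bar>)"
  shows "l \<bullet> opA a x = (\<Sum>k. comb_seq a l k * x k)"
proof -
  have summ: "summable (\<lambda>k. a j k * x k)" for j
  proof -
    obtain K where "\<And>k. \<bar>a j k\<bar> \<le> K" using tendsto_0_bounded c0 by blast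
    then show ?thesis using x by (rule summable_bounded_mult)
  qed
  have "l \<bullet> opA a x = (\<Sum>j\<in>UNIV. (\<Sum>k. l$j * (a j k * x k)))"
    by (simp add: inner_vec_def opA_def suminf_mult[OF summ])
  also have "\<dots> = (\<Sum>k. \<Sum>j\<in>UNIV. l$j * (a j k * x k))"
    by (rule suminf_sum[symmetric]) (use summable_mult[OF summ] in simp)
  finally show ?thesis by (simp add: comb_seq_def sum_distrib_right mult.assoc)
qed

lemma inner_opA_cols: "l \<bullet> opA_cols a kk n z = (\<Sum>j<n. comb_seq a l (kk j) * z j)"
  by (simp add: opA_cols_def comb_seq_def inner_vec_def sum_distrib_left sum_distrib_right
      sum.swap[of _ UNIV] algebra_simps)

section \<open>Weak duality and the restricted dual\<close>

lemma dual_feasible_bound: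
  assumes norm: "is_norm N" and c0: "\<forall>j. a j \<longlonglongrightarrow> 0" and rho: "0 < \<rho>"
    and p: "1 \<le> p" "p' > 1" "1 / ereal p + 1 / p' = 1"
    and feas: "dual_feasible N a \<rho> p p' l"
    and X: "0 \<le> X" and s: "s \<le> sup_norm (comb_seq a l) * X"
  shows "l \<bullet> w + s \<le> objective \<rho> p (N w) X"
proof -
  define T where "T = sup_norm (\<lambda>k. \<rho> powr (-1/p) * comb_seq a l k)"
  have "T = \<rho> powr (-1/p) * sup_norm (comb_seq a l)"
    unfolding T_def by (rule sup_norm_cmult[OF comb_seq_tendsto_0[OF c0]]) simp
  then have "s \<le> T * (\<rho> powr (1/p) * X)"
    using s rho by (simp add: powr_minus_divide)
  moreover have "l \<bullet> w \<le> dual_norm N l * N w" by (rule inner_le_dual_norm[OF norm])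
  ultimately have "l \<bullet> w + s \<le> dual_norm N l * N w + T * (\<rho> powr (1/p) * X)" by linarith
  also have "\<dots> \<le> (N w powr p + (\<rho> powr (1/p) * X) powr p) powr (1/p)"
    using feas pair_norm_le_1_iff[OF p dual_norm_nonneg[OF norm] sup_norm_nonneg]
      comb_seq_tendsto_0[OF c0] is_norm_nonneg[OF norm] X
    by (simp add: dual_feasible_def T_def tendsto_mult_right_zero)
  also have "\<dots> = objective \<rho> p (N w) X"
    using rho p X by (simp add: objective_eq_pair)
  finally show ?thesis .
qed

lemma weak_duality:
  assumes norm: "is_norm N" and c0: "\<forall>j. a j \<longlonglongrightarrow> 0" and rho: "0 < \<rho>"
    and p: "1 \<le> p" "p' > 1" "1 / ereal p + 1 / p' = 1"
    and feas: "dual_feasible N a \<rho> p p' l" and x: "summable (\<lambda>k. \<bar>x k\<bar>)"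
  shows "l \<bullet> y0 \<le> objective \<rho> p (N (y0 - opA a x)) (\<Sum>k. \<bar>x k\<bar>)"
  using dual_feasible_bound[OF norm c0 rho p feas, of "\<Sum>k. \<bar>x k\<bar>" "l \<bullet> opA a x" "y0 - opA a x"]
    suminf_mult_le_sup_norm[OF comb_seq_tendsto_0[OF c0] x] x
  by (simp add: inner_opA[OF c0 x] inner_diff_right suminf_nonneg)

lemma dual_feasible_0:
  assumes "is_norm N" "1 \<le> p" "p' > 1" "1 / ereal p + 1 / p' = 1"
  shows "dual_feasible N a \<rho> p p' 0"
  using pair_norm_le_1_iff[OF assms(2-4), of 0 0] assms(2)
  by (simp add: dual_feasible_def dual_norm_0[OF assms(1)] comb_seq_def sup_norm_def)

text \<open>Feasibility for the dual of the problem restricted to the columns \<open>kk 0, \<dots>, kk (n - 1)\<close>,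
  in the equivalent form produced by the separation argument.\<close>
definition restr_dual_feasible ::
    "(real^'m \<Rightarrow> real) \<Rightarrow> ('m::finite \<Rightarrow> nat \<Rightarrow> real) \<Rightarrow> real \<Rightarrow> real \<Rightarrow> (nat \<Rightarrow> nat) \<Rightarrow> nat \<Rightarrow> real^'m \<Rightarrow> bool"
  where "restr_dual_feasible N a \<rho> p kk n l \<longleftrightarrow>
    (\<forall>w z. l \<bullet> w + l \<bullet> opA_cols a kk n z \<le> objective \<rho> p (N w) (\<Sum>j<n. \<bar>z j\<bar>))"

lemma dual_feasible_imp_restr_dual_feasible:
  assumes norm: "is_norm N" and c0: "\<forall>j. a j \<longlonglongrightarrow> 0" and rho: "0 < \<rho>"
    and p: "1 \<le> p" "p' > 1" "1 / ereal p + 1 / p' = 1"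
    and feas: "dual_feasible N a \<rho> p p' l"
  shows "restr_dual_feasible N a \<rho> p kk n l"
  unfolding restr_dual_feasible_def inner_opA_cols
  using dual_feasible_bound[OF norm c0 rho p feas] sum_mult_le_sup_norm[OF comb_seq_tendsto_0[OF c0]]
  by (simp add: sum_nonneg)

lemma restr_dual_feasible_convex:
  assumes "restr_dual_feasible N a \<rho> p kk n l1" "restr_dual_feasible N a \<rho> p kk n l2"
    and "0 \<le> t" "t \<le> 1"
  shows "restr_dual_feasible N a \<rho> p kk n ((1 - t) *\<^sub>R l1 + t *\<^sub>R l2)"
  unfolding restr_dual_feasible_def
proof (intro allI)
  fix w z
  let ?\<Phi> = "objective \<rho> p (N w) (\<Sum>j<n. \<bar>z j\<bar>)"
  have "((1 - t) *\<^sub>R l1 + t *\<^sub>R l2) \<bullet> w + ((1 - t) *\<^sub>R l1 + t *\<^sub>R l2) \<bullet> opA_cols a kk n z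
      = (1 - t) * (l1 \<bullet> w + l1 \<bullet> opA_cols a kk n z) + t * (l2 \<bullet> w + l2 \<bullet> opA_cols a kk n z)"
    by (simp add: inner_add_left algebra_simps)
  also have "\<dots> \<le> (1 - t) * ?\<Phi> + t * ?\<Phi>"
    using assms by (intro add_mono mult_left_mono) (auto simp: restr_dual_feasible_def)
  finally show "((1 - t) *\<^sub>R l1 + t *\<^sub>R l2) \<bullet> w + ((1 - t) *\<^sub>R l1 + t *\<^sub>R l2) \<bullet> opA_cols a kk n z \<le> ?\<Phi>"
    by (simp add: algebra_simps)
qed

lemma restr_dual_feasible_spike:
  assumes norm: "is_norm N" and rho: "0 < \<rho>" and p: "1 \<le> p"
    and restr: "restr_dual_feasible N a \<rho> p kk n l" and j0: "j0 < n"
    and "0 \<le> \<alpha>" "0 \<le> s" "N y \<le> 1"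
  shows "\<alpha> * (l \<bullet> y) + \<bar>comb_seq a l (kk j0)\<bar> * s \<le> objective \<rho> p \<alpha> s"
proof -
  define m where "m = comb_seq a l (kk j0)"
  define z where "z j = (if j = j0 then sgn m * s else 0)" for j
  have "l \<bullet> opA_cols a kk n z = (\<Sum>j<n. if j = j0 then m * (sgn m * s) else 0)"
    unfolding inner_opA_cols z_def m_def by (intro sum.cong) auto
  also have "\<dots> = \<bar>m\<bar> * s" using j0 by (simp add: abs_sgn[of m])
  finally have "\<alpha> * (l \<bullet> y) + \<bar>m\<bar> * s = l \<bullet> (\<alpha> *\<^sub>R y) + l \<bullet> opA_cols a kk n z" by simp
  also have "\<dots> \<le> objective \<rho> p (N (\<alpha> *\<^sub>R y)) (\<Sum>j<n. \<bar>z j\<bar>)"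
    using restr unfolding restr_dual_feasible_def by blast
  also have "\<dots> \<le> objective \<rho> p \<alpha> s"
  proof (rule objective_mono)
    show "N (\<alpha> *\<^sub>R y) \<le> \<alpha>"
      using assms(6,8) by (simp add: is_norm_scaleR[OF norm] mult_left_le)
    show "(\<Sum>j<n. \<bar>z j\<bar>) \<le> s"
      using j0 assms(7) by (simp add: z_def abs_mult abs_sgn_eq if_distrib[of abs] cong: if_cong)
  qed (use rho p is_norm_nonneg[OF norm] in auto)
  finally show ?thesis by (simp add: m_def)
qed

lemma restr_dual_feasible_imp_dual_feasible:
  assumes norm: "is_norm N" and c0: "\<forall>j. a j \<longlonglongrightarrow> 0" and rho: "0 < \<rho>"
    and p: "1 \<le> p" "p' > 1" "1 / ereal p + 1 / p' = 1"
    and restr: "restr_dual_feasible N a \<rho> p kk n l"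
    and j0: "j0 < n" and max: "\<And>k. \<bar>comb_seq a l k\<bar> \<le> \<bar>comb_seq a l (kk j0)\<bar>"
  shows "dual_feasible N a \<rho> p p' l"
proof -
  define m where "m = comb_seq a l (kk j0)"
  define c where "c = \<rho> powr (-1/p)"
  have c: "0 < c" "\<rho> powr (1/p) * c = 1"
    using rho by (simp_all add: c_def powr_minus_divide)
  define T where "T = sup_norm (\<lambda>k. c * comb_seq a l k)"
  have "sup_norm (comb_seq a l) = \<bar>m\<bar>"
    using abs_le_sup_norm[OF comb_seq_tendsto_0[OF c0], of l "kk j0"] max
    by (intro antisym sup_norm_le) (simp_all add: m_def)
  then have T: "T = c * \<bar>m\<bar>"
    unfolding T_def using c by (simp add: sup_norm_cmult[OF comb_seq_tendsto_0[OF c0]])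
  have "dual_norm N l * \<alpha> + T * \<beta> \<le> (\<alpha> powr p + \<beta> powr p) powr (1/p)"
    if "0 \<le> \<alpha>" "0 \<le> \<beta>" for \<alpha> \<beta>
  proof -
    have "\<alpha> * (l \<bullet> y) \<le> objective \<rho> p \<alpha> (c * \<beta>) - T * \<beta>" if "N y \<le> 1" for y
      using restr_dual_feasible_spike[OF norm rho p(1) restr j0, of \<alpha> "c * \<beta>" y] that
        \<open>0 \<le> \<alpha>\<close> \<open>0 \<le> \<beta>\<close> c(1)
      by (simp add: T m_def algebra_simps)
    then have "\<alpha> * dual_norm N l \<le> objective \<rho> p \<alpha> (c * \<beta>) - T * \<beta>"
      by (rule mult_dual_norm_le[OF norm \<open>0 \<le> \<alpha>\<close>])
    moreover have "objective \<rho> p \<alpha> (c * \<beta>) = (\<alpha> powr p + \<beta> powr p) powr (1/p)"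
      using rho p c \<open>0 \<le> \<beta>\<close> by (simp add: objective_eq_pair mult.assoc[symmetric])
    ultimately show ?thesis by (simp add: mult.commute)
  qed
  then show ?thesis
    using pair_norm_le_1_iff[OF p dual_norm_nonneg[OF norm]] T c(1)
    by (simp add: dual_feasible_def T_def c_def)
qed

section \<open>Strong duality for the restricted problem\<close>

lemma opA_cols_lincomb:
  "opA_cols a kk n (\<lambda>j. u * z1 j + v * z2 j) = u *\<^sub>R opA_cols a kk n z1 + v *\<^sub>R opA_cols a kk n z2"
  by (simp add: opA_cols_def vec_eq_iff sum.distrib sum_distrib_left algebra_simps)

lemma opA_cols_scale: "opA_cols a kk n (\<lambda>j. k * z j) = k *\<^sub>R opA_cols a kk n z"
  using opA_cols_lincomb[of a kk n k z 0] by simp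

lemma opA_cols_zero: "opA_cols a kk n (\<lambda>_. 0) = 0"
  by (simp add: opA_cols_def vec_eq_iff)

lemma convex_objective_sublevel_image:
  assumes norm: "is_norm N" and rho: "0 \<le> \<rho>" and p: "1 \<le> p"
  shows "convex {w + opA_cols a kk n z | w z. objective \<rho> p (N w) (\<Sum>j<n. \<bar>z j\<bar>) < V}"
proof (rule convexI, clarsimp)
  fix w1 z1 w2 z2 and u v :: real
  assume lt: "objective \<rho> p (N w1) (\<Sum>j<n. \<bar>z1 j\<bar>) < V" "objective \<rho> p (N w2) (\<Sum>j<n. \<bar>z2 j\<bar>) < V"
    and uv: "0 \<le> u" "0 \<le> v" "u + v = 1"
  define w where "w = u *\<^sub>R w1 + v *\<^sub>R w2"
  define z where "z j = u * z1 j + v * z2 j" for j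
  have "N w \<le> u * N w1 + v * N w2"
    unfolding w_def using is_norm_triangle[OF norm, of "u *\<^sub>R w1" "v *\<^sub>R w2"] uv
    by (simp add: is_norm_scaleR[OF norm])
  moreover have "(\<Sum>j<n. \<bar>z j\<bar>) \<le> u * (\<Sum>j<n. \<bar>z1 j\<bar>) + v * (\<Sum>j<n. \<bar>z2 j\<bar>)"
    unfolding z_def sum_distrib_left sum.distrib[symmetric] using uv
    by (intro sum_mono) (metis abs_mult abs_of_nonneg abs_triangle_ineq)
  ultimately have "objective \<rho> p (N w) (\<Sum>j<n. \<bar>z j\<bar>)
      \<le> objective \<rho> p (u * N w1 + v * N w2) (u * (\<Sum>j<n. \<bar>z1 j\<bar>) + v * (\<Sum>j<n. \<bar>z2 j\<bar>))"
    using rho p by (intro objective_mono) (auto simp: is_norm_nonneg[OF norm])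
  also have "\<dots> < V"
    using objective_quasiconvex[OF rho p uv _ _ _ _ lt] by (simp add: is_norm_nonneg[OF norm] sum_nonneg)
  finally have "objective \<rho> p (N w) (\<Sum>j<n. \<bar>z j\<bar>) < V" .
  moreover have "u *\<^sub>R (w1 + opA_cols a kk n z1) + v *\<^sub>R (w2 + opA_cols a kk n z2) = w + opA_cols a kk n z"
    by (simp add: w_def z_def[abs_def] opA_cols_lincomb algebra_simps)
  ultimately show "\<exists>w' z'. u *\<^sub>R (w1 + opA_cols a kk n z1) + v *\<^sub>R (w2 + opA_cols a kk n z2)
      = w' + opA_cols a kk n z' \<and> objective \<rho> p (N w') (\<Sum>j<n. \<bar>z' j\<bar>) < V"
    by blast
qed

lemma objective_homogeneous:
  assumes "is_norm N" "0 \<le> \<rho>" "0 < p" "0 \<le> k"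
  shows "objective \<rho> p (N (k *\<^sub>R w)) (\<Sum>j<n. \<bar>k * z j\<bar>)
    = k * objective \<rho> p (N w) (\<Sum>j<n. \<bar>z j\<bar>)"
  using assms objective_scale[of \<rho> p k "N w" "\<Sum>j<n. \<bar>z j\<bar>"]
  by (simp add: is_norm_scaleR is_norm_nonneg abs_mult sum_nonneg flip: sum_distrib_left)

lemma restr_dual_feasible_of_separation:
  assumes norm: "is_norm N" and rho: "0 < \<rho>" and p: "1 \<le> p" and V: "0 < V"
    and cy0: "0 < c \<bullet> y0"
    and sep: "\<And>w z. objective \<rho> p (N w) (\<Sum>j<n. \<bar>z j\<bar>) < V
                \<Longrightarrow> c \<bullet> (w + opA_cols a kk n z) \<le> c \<bullet> y0"
  shows "restr_dual_feasible N a \<rho> p kk n ((V / (c \<bullet> y0)) *\<^sub>R c)"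
  unfolding restr_dual_feasible_def
proof (intro allI, rule dense_ge)
  fix w z \<phi>
  let ?l = "(V / (c \<bullet> y0)) *\<^sub>R c"
  assume \<phi>: "objective \<rho> p (N w) (\<Sum>j<n. \<bar>z j\<bar>) < \<phi>"
  then have \<phi>0: "0 < \<phi>" using objective_nonneg le_less_trans by blast
  \<comment> \<open>Scaling \<open>(w, z)\<close> by \<open>k\<close> moves it into the strict sublevel set on which \<open>sep\<close> holds.\<close>
  define k where "k = V / \<phi>"
  have k: "0 < k" using V \<phi>0 by (simp add: k_def)
  have "objective \<rho> p (N (k *\<^sub>R w)) (\<Sum>j<n. \<bar>k * z j\<bar>)
      = k * objective \<rho> p (N w) (\<Sum>j<n. \<bar>z j\<bar>)"
    using norm rho p k by (intro objective_homogeneous) auto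
  also have "\<dots> < k * \<phi>" using \<phi> k by simp
  also have "\<dots> = V" using \<phi>0 by (simp add: k_def)
  finally have "c \<bullet> (k *\<^sub>R w + opA_cols a kk n (\<lambda>j. k * z j)) \<le> c \<bullet> y0"
    by (intro sep) simp
  then have "k * (c \<bullet> w + c \<bullet> opA_cols a kk n z) \<le> c \<bullet> y0"
    by (simp add: opA_cols_scale inner_add_right algebra_simps)
  then show "?l \<bullet> w + ?l \<bullet> opA_cols a kk n z \<le> \<phi>"
    using k cy0 V \<phi>0 by (simp add: k_def field_simps)
qed

lemma restr_strong_duality:
  fixes N :: "real^'m \<Rightarrow> real" and a :: "'m \<Rightarrow> nat \<Rightarrow> real"
  assumes norm: "is_norm N" and rho: "0 < \<rho>" and p: "1 \<le> p" and V: "0 < V"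
    and opt: "\<And>z. V \<le> objective \<rho> p (N (y0 - opA_cols a kk n z)) (\<Sum>j<n. \<bar>z j\<bar>)"
  obtains l where "l \<bullet> y0 = V" "restr_dual_feasible N a \<rho> p kk n l"
proof -
  define C where "C = {w + opA_cols a kk n z | w z. objective \<rho> p (N w) (\<Sum>j<n. \<bar>z j\<bar>) < V}"
  have scaled_in_C: "r *\<^sub>R w \<in> C" if "0 \<le> r" "r * N w < V" for r w
  proof -
    have "objective \<rho> p (N (r *\<^sub>R w)) (\<Sum>j<n. \<bar>0::real\<bar>) = r * N w"
      using that rho p
      by (simp add: objective_def is_norm_scaleR[OF norm] is_norm_nonneg[OF norm] powr_powr)
    then show ?thesis
      unfolding C_def using that opA_cols_zero
      by (intro CollectI exI[of _ "r *\<^sub>R w"] exI[of _ "\<lambda>_. 0"]) simp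
  qed
  have "0 *\<^sub>R 0 \<in> C" using V by (intro scaled_in_C) auto
  then have "C \<noteq> {}" by blast
  moreover have "y0 \<notin> C"
  proof
    assume "y0 \<in> C"
    then obtain w z where "y0 = w + opA_cols a kk n z" "objective \<rho> p (N w) (\<Sum>j<n. \<bar>z j\<bar>) < V"
      by (auto simp: C_def)
    then show False using opt[of z] by (simp add: algebra_simps)
  qed
  ultimately obtain c b where c: "c \<noteq> 0" "\<forall>x\<in>C. c \<bullet> x \<le> b" "\<forall>x\<in>{y0}. b \<le> c \<bullet> x"
    using separating_hyperplane_sets[OF _ convex_singleton, of C y0] rho
    unfolding C_def by (auto simp: convex_objective_sublevel_image[OF norm _ p])
  then have sep: "c \<bullet> x \<le> c \<bullet> y0" if "x \<in> C" for x
    using that by fastforce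
  have cy0: "0 < c \<bullet> y0"
  proof -
    define r where "r = V / (2 * N c)"
    have "0 < r" "r * N c < V" using V c(1) is_norm_pos[OF norm, of c] by (simp_all add: r_def)
    then have "c \<bullet> (r *\<^sub>R c) \<le> c \<bullet> y0" by (intro sep scaled_in_C) auto
    moreover have "0 < c \<bullet> (r *\<^sub>R c)" using \<open>0 < r\<close> c(1) by simp
    ultimately show ?thesis by simp
  qed
  moreover have "c \<bullet> (w + opA_cols a kk n z) \<le> c \<bullet> y0"
    if "objective \<rho> p (N w) (\<Sum>j<n. \<bar>z j\<bar>) < V" for w z
    using sep that by (auto simp: C_def)
  ultimately have "restr_dual_feasible N a \<rho> p kk n ((V / (c \<bullet> y0)) *\<^sub>R c)"
    by (rule restr_dual_feasible_of_separation[OF norm rho p V])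
  moreover have "((V / (c \<bullet> y0)) *\<^sub>R c) \<bullet> y0 = V" using cy0 by simp
  ultimately show thesis using that by blast
qed

section \<open>Perturbing the dual optimum\<close>

lemma sup_norm_gap:
  fixes f :: "nat \<Rightarrow> real"
  assumes f: "f \<longlonglongrightarrow> 0" and fin: "finite {k. \<bar>f k\<bar> = sup_norm f}"
  obtains \<delta> where "0 < \<delta>" "\<And>k. \<bar>f k\<bar> \<noteq> sup_norm f \<Longrightarrow> \<bar>f k\<bar> \<le> sup_norm f - \<delta>"
proof -
  define M where "M = sup_norm f"
  have le: "\<bar>f k\<bar> \<le> M" for k using abs_le_sup_norm[OF f] by (simp add: M_def)
  have "0 < M"
  proof (rule ccontr)
    assume "\<not> 0 < M"
    then have "{k. \<bar>f k\<bar> = M} = UNIV" using le by (auto intro: antisym)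
    then show False using fin by (simp add: M_def)
  qed
  then obtain K where K: "\<And>k. K \<le> k \<Longrightarrow> \<bar>f k\<bar> < M/2"
    using LIMSEQ_D[OF f, of "M/2"] by auto
  define m where "m = Max (insert (M/2) ((\<lambda>k. \<bar>f k\<bar>) ` {k. k < K \<and> \<bar>f k\<bar> \<noteq> M}))"
  have "m \<in> insert (M/2) ((\<lambda>k. \<bar>f k\<bar>) ` {k. k < K \<and> \<bar>f k\<bar> \<noteq> M})"
    unfolding m_def by (intro Max_in) auto
  then have "m < M" using \<open>0 < M\<close> le by (auto simp: order_less_le)
  moreover have "\<bar>f k\<bar> \<le> m" if "\<bar>f k\<bar> \<noteq> M" for k
  proof (cases "k < K")
    case True
    then show ?thesis using that unfolding m_def by (intro Max_ge) auto
  next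
    case False
    then have "\<bar>f k\<bar> < M/2" using K by simp
    also have "M/2 \<le> m" unfolding m_def by (intro Max_ge) auto
    finally show ?thesis by simp
  qed
  ultimately show thesis using that[of "M - m"] by (simp add: M_def)
qed

lemma perturbation_max_in_argmax:
  fixes f d :: "nat \<Rightarrow> real"
  assumes f: "f \<longlonglongrightarrow> 0" and d: "d \<longlonglongrightarrow> 0" and fin: "finite {k. \<bar>f k\<bar> = sup_norm f}"
  obtains t k0 where "0 < t" "t \<le> 1" "\<bar>f k0\<bar> = sup_norm f"
    "\<And>k. \<bar>f k + t * d k\<bar> \<le> \<bar>f k0 + t * d k0\<bar>"
proof -
  define S where "S = {k. \<bar>f k\<bar> = sup_norm f}"
  obtain \<delta> where \<delta>: "0 < \<delta>" "\<And>k. k \<notin> S \<Longrightarrow> \<bar>f k\<bar> \<le> sup_norm f - \<delta>"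
    using sup_norm_gap[OF f fin] by (auto simp: S_def)
  obtain k1 where k1: "k1 \<in> S"
  proof (cases "S = {}")
    case True
    then have "sup_norm f \<le> sup_norm f - \<delta>" using \<delta>(2) by (intro sup_norm_le) auto
    then show thesis using \<delta>(1) by simp
  qed auto
  obtain D where D: "0 < D" "\<And>k. \<bar>d k\<bar> \<le> D" using tendsto_0_bounded[OF d] by blast
  define t where "t = min 1 (\<delta> / (4 * D))"
  have t: "0 < t" "t \<le> 1" using \<delta>(1) D(1) by (auto simp: t_def)
  have td: "\<bar>t * d k\<bar> \<le> \<delta>/4" for k
  proof -
    have "\<bar>t * d k\<bar> \<le> t * D" using t D(2)[of k] by (simp add: abs_mult mult_left_mono)
    also have "\<dots> \<le> \<delta> / (4 * D) * D" using D(1) by (intro mult_right_mono) (auto simp: t_def)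
    finally show ?thesis using D(1) by simp
  qed
  define g where "g k = \<bar>f k + t * d k\<bar>" for k
  have "Max (g ` S) \<in> g ` S" using fin k1 by (intro Max_in) (auto simp: S_def)
  then obtain k0 where k0: "k0 \<in> S" "g k0 = Max (g ` S)" by auto
  have "g k \<le> g k0" for k
  proof (cases "k \<in> S")
    case True
    then show ?thesis using fin k0(2) by (simp add: S_def)
  next
    case False
    have "g k \<le> sup_norm f - \<delta> + \<delta>/4"
      using \<delta>(2)[OF False] td[of k] unfolding g_def by linarith
    also have "\<dots> < g k1"
      using k1 td[of k1] \<delta>(1) abs_triangle_ineq[of "f k1 + t * d k1" "- (t * d k1)"]
      unfolding g_def S_def by simp
    also have "g k1 \<le> g k0" using fin k1 k0(2) by (simp add: S_def)
    finally show ?thesis by simp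
  qed
  then show thesis using that[OF t] k0(1) by (simp add: g_def S_def)
qed

lemma restr_value_le_dual_value:
  fixes N :: "real^'m \<Rightarrow> real" and a :: "'m \<Rightarrow> nat \<Rightarrow> real"
  assumes norm: "is_norm N" and c0: "\<forall>j. a j \<longlonglongrightarrow> 0" and rho: "0 < \<rho>"
    and p: "1 \<le> p" "p' > 1" "1 / ereal p + 1 / p' = 1"
    and feas: "dual_feasible N a \<rho> p p' lam"
    and lam_opt: "\<And>l. dual_feasible N a \<rho> p p' l \<Longrightarrow> l \<bullet> y0 \<le> lam \<bullet> y0"
    and argmax: "kk ` {..<n} = {k. \<bar>comb_seq a lam k\<bar> = sup_norm (comb_seq a lam)}"
    and opt: "\<And>z. V \<le> objective \<rho> p (N (y0 - opA_cols a kk n z)) (\<Sum>j<n. \<bar>z j\<bar>)"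
  shows "V \<le> lam \<bullet> y0"
proof (cases "0 < V")
  case False
  then show ?thesis using lam_opt[OF dual_feasible_0[OF norm p]] by simp
next
  case True
  obtain l' where l': "l' \<bullet> y0 = V" "restr_dual_feasible N a \<rho> p kk n l'"
    using restr_strong_duality[OF norm rho p(1) True opt] by blast
  have "finite {k. \<bar>comb_seq a lam k\<bar> = sup_norm (comb_seq a lam)}"
    by (simp flip: argmax)
  then obtain t k0 where t: "0 < t" "t \<le> 1"
    and k0: "\<bar>comb_seq a lam k0\<bar> = sup_norm (comb_seq a lam)"
    and max: "\<And>k. \<bar>comb_seq a lam k + t * comb_seq a (l' - lam) k\<bar>
                 \<le> \<bar>comb_seq a lam k0 + t * comb_seq a (l' - lam) k0\<bar>"
    using perturbation_max_in_argmax[OF comb_seq_tendsto_0[OF c0] comb_seq_tendsto_0[OF c0]] by blast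
  from k0 have "k0 \<in> kk ` {..<n}" by (simp add: argmax)
  then obtain j0 where j0: "j0 < n" "k0 = kk j0" by auto
  define lt where "lt = (1 - t) *\<^sub>R lam + t *\<^sub>R l'"
  have comb_lt: "comb_seq a lt k = comb_seq a lam k + t * comb_seq a (l' - lam) k" for k
    by (simp add: lt_def comb_seq_add comb_seq_diff comb_seq_scaleR algebra_simps)
  have "restr_dual_feasible N a \<rho> p kk n lt"
    unfolding lt_def using t
    by (intro restr_dual_feasible_convex[OF dual_feasible_imp_restr_dual_feasible[OF norm c0 rho p feas] l'(2)])
      simp_all
  then have "dual_feasible N a \<rho> p p' lt"
    by (rule restr_dual_feasible_imp_dual_feasible[OF norm c0 rho p _ j0(1)])
      (use max in \<open>simp add: comb_lt j0(2)\<close>)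
  then have "lt \<bullet> y0 \<le> lam \<bullet> y0" by (rule lam_opt)
  then have "(1 - t) * (lam \<bullet> y0) + t * V \<le> lam \<bullet> y0"
    using l'(1) by (simp add: lt_def inner_add_left)
  then have "t * V \<le> t * (lam \<bullet> y0)" by (simp add: algebra_simps)
  then show ?thesis using t(1) by simp
qed

theorem proposition4p1:
  fixes N :: "real^'m \<Rightarrow> real"
    and a :: "'m \<Rightarrow> nat \<Rightarrow> real"
    and y0 :: "real^'m"
    and \<rho> p :: real
    and p' :: ereal
    and lam :: "real^'m"
    and n :: nat
    and kk :: "nat \<Rightarrow> nat"
    and zhat xhat :: "nat \<Rightarrow> real"
  assumes norm: "is_norm N"
    and c0: "\<forall>j. a j \<longlonglongrightarrow> 0"
    and indep: "lin_indep_family a"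
    and rho: "\<rho> > 0"
    and p: "1 \<le> p"
    and p': "p' > 1" "1 / ereal p + 1 / p' = 1"
    and lam_feas: "pair_norm p' (dual_norm N lam)
          (sup_norm (\<lambda>k. \<rho> powr (-1/p) * (\<Sum>j\<in>UNIV. lam$j * a j k))) \<le> 1"
    and lam_opt: "\<forall>l::real^'m. pair_norm p' (dual_norm N l)
          (sup_norm (\<lambda>k. \<rho> powr (-1/p) * (\<Sum>j\<in>UNIV. l$j * a j k))) \<le> 1
          \<longrightarrow> (\<Sum>j\<in>UNIV. y0$j * l$j) \<le> (\<Sum>j\<in>UNIV. y0$j * lam$j)"
    and enum: "bij_betw kk {..<n}
          {k. \<bar>\<Sum>j\<in>UNIV. lam$j * a j k\<bar> = sup_norm (\<lambda>k. \<Sum>j\<in>UNIV. lam$j * a j k)}"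
    and zhat_opt: "\<forall>z::nat \<Rightarrow> real.
          (N (y0 - (\<chi> i. \<Sum>j<n. a i (kk j) * zhat j)) powr p
             + \<rho> * (\<Sum>j<n. \<bar>zhat j\<bar>) powr p) powr (1/p)
          \<le> (N (y0 - (\<chi> i. \<Sum>j<n. a i (kk j) * z j)) powr p
             + \<rho> * (\<Sum>j<n. \<bar>z j\<bar>) powr p) powr (1/p)"
    and xhat_on: "\<forall>j<n. xhat (kk j) = zhat j"
    and xhat_off: "\<forall>k. k \<notin> kk ` {..<n} \<longrightarrow> xhat k = 0"
  shows "summable (\<lambda>k. \<bar>xhat k\<bar>) \<and>
    (\<forall>x::nat \<Rightarrow> real. summable (\<lambda>k. \<bar>x k\<bar>) \<longrightarrow>
      (N (y0 - opA a xhat) powr p + \<rho> * (\<Sum>k. \<bar>xhat k\<bar>) powr p) powr (1/p)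
      \<le> (N (y0 - opA a x) powr p + \<rho> * (\<Sum>k. \<bar>x k\<bar>) powr p) powr (1/p))"
proof -
  have inj: "inj_on kk {..<n}" using enum by (rule bij_betw_imp_inj_on)
  have argmax: "kk ` {..<n} = {k. \<bar>comb_seq a lam k\<bar> = sup_norm (comb_seq a lam)}"
    using bij_betw_imp_surj_on[OF enum] by (simp add: comb_seq_def[abs_def])
  have feas: "dual_feasible N a \<rho> p p' lam"
    using lam_feas by (simp add: dual_feasible_def comb_seq_def)
  have opt: "\<And>l. dual_feasible N a \<rho> p p' l \<Longrightarrow> l \<bullet> y0 \<le> lam \<bullet> y0"
    using lam_opt by (simp add: dual_feasible_def comb_seq_def inner_vec_def mult.commute)
  have xhat_l1: "summable (\<lambda>k. \<bar>xhat k\<bar>)" "(\<Sum>k. \<bar>xhat k\<bar>) = (\<Sum>j<n. \<bar>zhat j\<bar>)"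
    using suminf_finite_support[OF inj xhat_on xhat_off, of "\<lambda>_ v. \<bar>v\<bar>"] by simp_all
  have "objective \<rho> p (N (y0 - opA a xhat)) (\<Sum>k. \<bar>xhat k\<bar>) \<le> lam \<bullet> y0"
    using restr_value_le_dual_value[OF norm c0 rho p p' feas opt argmax] zhat_opt
    by (simp add: xhat_l1 opA_finite_support[OF inj xhat_on xhat_off] objective_def opA_cols_def)
  moreover have "lam \<bullet> y0 \<le> objective \<rho> p (N (y0 - opA a x)) (\<Sum>k. \<bar>x k\<bar>)"
    if "summable (\<lambda>k. \<bar>x k\<bar>)" for x
    by (rule weak_duality[OF norm c0 rho p p' feas that])
  ultimately show ?thesis using xhat_l1(1) unfolding objective_def by (meson order.trans)
qed

end
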